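(* Let $G$ be a finite group with centre $Z(G)$. Then \[ \frac{1}{|G|^2}\sum_{\chi, \chi' \in \mathrm{Irr}(G)} d_\chi d_{\chi'}\left|\sum_{x \in Z(G)}\chi(x)\overline{\chi'(x)}\right| = 1. \]
   Context: $\mathrm{Irr}(G)$ is the set of irreducible complex characters of $G$ and $d_\chi = \chi(e)$ is the degree of $\chi$. *)

theory Defs
  imports "HOL-Algebra.Group" "Jordan_Normal_Form.Matrix"
begin

definition group_centre :: "('a, 'b) monoid_scheme \<Rightarrow> 'a set" where
  "group_centre G = {z \<in> carrier G. \<forall>g \<in> carrier G. z \<otimes>\<^bsub>G\<^esub> g = g \<otimes>\<^bsub>G\<^esub> z}"

definition mat_trace :: "'a::comm_ring_1 mat \<Rightarrow> 'a" where
  "mat_trace A = (\<Sum>i<dim_row A. A $$ (i, i))"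

definition complex_rep :: "('a, 'b) monoid_scheme \<Rightarrow> nat \<Rightarrow> ('a \<Rightarrow> complex mat) \<Rightarrow> bool" where
  "complex_rep G n \<rho> \<longleftrightarrow> n > 0 \<and>
     (\<forall>g \<in> carrier G. \<rho> g \<in> carrier_mat n n \<and> invertible_mat (\<rho> g)) \<and>
     \<rho> \<one>\<^bsub>G\<^esub> = 1\<^sub>m n \<and>
     (\<forall>g \<in> carrier G. \<forall>h \<in> carrier G. \<rho> (g \<otimes>\<^bsub>G\<^esub> h) = \<rho> g * \<rho> h)"

definition subspace_vec :: "nat \<Rightarrow> complex vec set \<Rightarrow> bool" where
  "subspace_vec n W \<longleftrightarrow> W \<subseteq> carrier_vec n \<and> 0\<^sub>v n \<in> W \<and>
     (\<forall>v \<in> W. \<forall>w \<in> W. v + w \<in> W) \<and> (\<forall>c. \<forall>v \<in> W. c \<cdot>\<^sub>v v \<in> W)"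

definition irreducible_rep :: "('a, 'b) monoid_scheme \<Rightarrow> nat \<Rightarrow> ('a \<Rightarrow> complex mat) \<Rightarrow> bool" where
  "irreducible_rep G n \<rho> \<longleftrightarrow> complex_rep G n \<rho> \<and>
     (\<forall>W. subspace_vec n W \<and> (\<forall>g \<in> carrier G. \<forall>w \<in> W. \<rho> g *\<^sub>v w \<in> W)
        \<longrightarrow> W = {0\<^sub>v n} \<or> W = carrier_vec n)"

definition character :: "('a, 'b) monoid_scheme \<Rightarrow> ('a \<Rightarrow> complex mat) \<Rightarrow> 'a \<Rightarrow> complex" where
  "character G \<rho> = (\<lambda>g. if g \<in> carrier G then mat_trace (\<rho> g) else 0)"

definition Irr :: "('a, 'b) monoid_scheme \<Rightarrow> ('a \<Rightarrow> complex) set" where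
  "Irr G = {\<chi>. \<exists>n \<rho>. irreducible_rep G n \<rho> \<and> \<chi> = character G \<rho>}"

definition char_degree :: "('a, 'b) monoid_scheme \<Rightarrow> ('a \<Rightarrow> complex) \<Rightarrow> complex" where
  "char_degree G \<chi> = \<chi> \<one>\<^bsub>G\<^esub>"

end

theory Submission
  imports Defs "Jordan_Normal_Form.Matrix_Kernel" "Jordan_Normal_Form.DL_Rank"
    "Jordan_Normal_Form.Spectral_Radius"
begin

text \<open>
  By Schur's lemma a central element acts by a scalar in every irreducible representation, so
  on \<open>Z(G)\<close> each \<open>\<chi> \<in> Irr G\<close> is \<open>\<chi> 1\<close> times a homomorphism \<open>Z(G) \<rightarrow> \<complex>\<^sup>*\<close>. Hence
  \<open>\<Sum>z\<in>Z(G). \<chi> z * cnj (\<chi>' z)\<close> is \<open>\<chi> 1 * \<chi>' 1\<close> times \<open>0\<close> or \<open>|Z(G)|\<close>, a nonnegative real, and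
  the absolute values can be dropped. Summing over \<open>\<chi>'\<close> first, the column orthogonality relation
  \<open>\<Sum>\<chi>\<in>Irr G. \<chi> 1 * \<chi> g = (if g = 1 then |G| else 0)\<close> leaves only \<open>z = 1\<close>, and the total
  is \<open>|G| * (\<Sum>\<chi>. (\<chi> 1)\<^sup>2) = |G|\<^sup>2\<close>.

  The column relation is the regular character written as a sum of irreducible characters.
  Such a decomposition exists for every representation, because a proper invariant subspace
  makes all matrices block upper triangular in an adapted basis; and the multiplicity of \<open>\<chi>\<close> in
  the regular character is \<open>\<chi> 1\<close> by the orthogonality relations, which come from applying Schur's
  lemma to the averages \<open>\<Sum>g. \<rho> g * X * \<sigma> (g\<inverse>)\<close>.
\<close>

lemma sum_list_eq_sum_count_list:
  fixes f :: "'x \<Rightarrow> 'a::comm_semiring_1"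
  assumes "finite X" "set xs \<subseteq> X"
  shows "(\<Sum>x\<leftarrow>xs. f x) = (\<Sum>x\<in>X. of_nat (count_list xs x) * f x)"
  using assms(2)
proof (induction xs)
  case (Cons a xs)
  then have "(\<Sum>x\<in>X. of_nat (count_list (a # xs) x) * f x)
      = (\<Sum>x\<in>X. (if x = a then f x else 0) + of_nat (count_list xs x) * f x)"
    by (intro sum.cong) (auto simp: distrib_right)
  also have "\<dots> = f a + (\<Sum>x\<in>X. of_nat (count_list xs x) * f x)"
    using assms(1) Cons.prems by (simp add: sum.distrib sum.delta')
  finally show ?case using Cons by simp
qed simp

section \<open>Matrices\<close>

lemma mat_trace_mult_comm:
  assumes A: "A \<in> carrier_mat n m" and B: "B \<in> carrier_mat m n"
  shows "mat_trace (A * B) = mat_trace (B * A)"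
proof -
  have "mat_trace (A * B) = (\<Sum>i<n. \<Sum>j<m. A $$ (i,j) * B $$ (j,i))"
    using A B unfolding mat_trace_def
    by (auto simp: scalar_prod_def lessThan_atLeast0 intro!: sum.cong)
  also have "\<dots> = (\<Sum>j<m. \<Sum>i<n. B $$ (j,i) * A $$ (i,j))"
    by (subst sum.swap) (simp add: mult.commute)
  also have "\<dots> = mat_trace (B * A)"
    using A B unfolding mat_trace_def
    by (auto simp: scalar_prod_def lessThan_atLeast0 intro!: sum.cong)
  finally show ?thesis .
qed

lemma mat_trace_smult_one: "mat_trace (c \<cdot>\<^sub>m 1\<^sub>m n :: 'a::comm_ring_1 mat) = of_nat n * c"
  unfolding mat_trace_def by simp

lemma index_mult_mat_vec_unit_vec:
  fixes M :: "'a::semiring_1 mat"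
  assumes "M \<in> carrier_mat p q" "i < p" "j < q"
  shows "(M *\<^sub>v unit_vec q j) $ i = M $$ (i, j)"
  using assms by simp

lemma mat_eq_if_mult_unit_vec_eq:
  fixes A B :: "'a::comm_ring_1 mat"
  assumes A: "A \<in> carrier_mat n m" and B: "B \<in> carrier_mat n m"
    and eq: "\<And>j. j < m \<Longrightarrow> A *\<^sub>v unit_vec m j = B *\<^sub>v unit_vec m j"
  shows "A = B"
proof (rule eq_matI)
  fix i j assume i: "i < dim_row B" and j: "j < dim_col B"
  then have "(A *\<^sub>v unit_vec m j) $ i = (B *\<^sub>v unit_vec m j) $ i" using eq B by auto
  then show "A $$ (i, j) = B $$ (i, j)" using A B i j by simp
qed (use A B in auto)

lemma zero_mat_mult_vec: "v \<in> carrier_vec m \<Longrightarrow> 0\<^sub>m n m *\<^sub>v v = (0\<^sub>v n :: 'a::semiring_0 vec)"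
  by (intro eq_vecI) (auto simp: scalar_prod_def)

lemma mat_zero_if_kernel_full:
  fixes A :: "'a::comm_ring_1 mat"
  assumes A: "A \<in> carrier_mat n m" and K: "mat_kernel A = carrier_vec m"
  shows "A = 0\<^sub>m n m"
proof (rule mat_eq_if_mult_unit_vec_eq[OF A zero_carrier_mat])
  fix j assume "j < m"
  then have "unit_vec m j \<in> mat_kernel A" using K by simp
  then show "A *\<^sub>v unit_vec m j = 0\<^sub>m n m *\<^sub>v unit_vec m j"
    using mat_kernelD(2)[OF A] by (simp add: zero_mat_mult_vec)
qed

lemma mat_zero_if_image_zero:
  fixes A :: "'a::comm_ring_1 mat"
  assumes A: "A \<in> carrier_mat n m" and I: "(*\<^sub>v) A ` carrier_vec m = {0\<^sub>v n}"
  shows "A = 0\<^sub>m n m"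
proof (rule mat_eq_if_mult_unit_vec_eq[OF A zero_carrier_mat])
  fix j assume "j < m"
  then have "A *\<^sub>v unit_vec m j \<in> (*\<^sub>v) A ` carrier_vec m" by simp
  then have "A *\<^sub>v unit_vec m j = 0\<^sub>v n" using I by simp
  then show "A *\<^sub>v unit_vec m j = 0\<^sub>m n m *\<^sub>v unit_vec m j" by (simp add: zero_mat_mult_vec)
qed

lemma subspace_vec_mat_kernel: "A \<in> carrier_mat n m \<Longrightarrow> subspace_vec m (mat_kernel A)"
  unfolding subspace_vec_def mat_kernel_def
  by (auto simp: mult_add_distrib_mat_vec mult_mat_vec)

lemma subspace_vec_mat_image:
  assumes A: "A \<in> carrier_mat n m"
  shows "subspace_vec n ((*\<^sub>v) A ` carrier_vec m)"
  unfolding subspace_vec_def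
proof (intro conjI ballI allI)
  show "(*\<^sub>v) A ` carrier_vec m \<subseteq> carrier_vec n" using A by auto
  show "0\<^sub>v n \<in> (*\<^sub>v) A ` carrier_vec m"
    using A by (intro image_eqI[of _ _ "0\<^sub>v m"]) auto
next
  fix v w assume "v \<in> (*\<^sub>v) A ` carrier_vec m" "w \<in> (*\<^sub>v) A ` carrier_vec m"
  then obtain v' w' where "v' \<in> carrier_vec m" "w' \<in> carrier_vec m" "v = A *\<^sub>v v'" "w = A *\<^sub>v w'"
    by blast
  then show "v + w \<in> (*\<^sub>v) A ` carrier_vec m"
    using A by (intro image_eqI[of _ _ "v' + w'"]) (auto simp: mult_add_distrib_mat_vec)
next
  fix c v assume "v \<in> (*\<^sub>v) A ` carrier_vec m"
  then obtain v' where "v' \<in> carrier_vec m" "v = A *\<^sub>v v'" by blast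
  then show "c \<cdot>\<^sub>v v \<in> (*\<^sub>v) A ` carrier_vec m"
    using A by (intro image_eqI[of _ _ "c \<cdot>\<^sub>v v'"]) (auto simp: mult_mat_vec)
qed

lemma mat_right_inverse_if_surj:
  fixes A :: "'a::comm_ring_1 mat"
  assumes A: "A \<in> carrier_mat n m" and surj: "(*\<^sub>v) A ` carrier_vec m = carrier_vec n"
  obtains C where "C \<in> carrier_mat m n" "A * C = 1\<^sub>m n"
proof -
  have "\<exists>v. v \<in> carrier_vec m \<and> A *\<^sub>v v = unit_vec n i" for i
    using surj unit_vec_carrier by (metis imageE)
  then obtain c where c: "\<And>i. c i \<in> carrier_vec m \<and> A *\<^sub>v c i = unit_vec n i" by metis
  define C where "C = mat m n (\<lambda>(j, i). c i $ j)"
  have C: "C \<in> carrier_mat m n" unfolding C_def by simp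
  have col: "col C i = c i" if "i < n" for i
    using c[of i] that unfolding C_def by (auto simp: col_mat)
  have "A * C = 1\<^sub>m n"
  proof (rule eq_matI)
    fix i j assume "i < dim_row (1\<^sub>m n :: 'a mat)" "j < dim_col (1\<^sub>m n :: 'a mat)"
    then have i: "i < n" and j: "j < n" by auto
    then have "(A * C) $$ (i, j) = (A *\<^sub>v c j) $ i" using A C col by simp
    also have "\<dots> = 1\<^sub>m n $$ (i, j)" using c[of j] i j by simp
    finally show "(A * C) $$ (i, j) = 1\<^sub>m n $$ (i, j)" .
  qed (use A C in auto)
  with C show ?thesis by (rule that)
qed

lemma mat_left_inverse_if_inj:
  fixes A :: "'a::comm_ring_1 mat"
  assumes A: "A \<in> carrier_mat n m" and C: "C \<in> carrier_mat m n" and AC: "A * C = 1\<^sub>m n"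
    and inj: "mat_kernel A = {0\<^sub>v m}"
  shows "C * A = 1\<^sub>m m"
proof (rule mat_eq_if_mult_unit_vec_eq)
  fix j assume "j < m"
  define v :: "'a vec" where "v = unit_vec m j"
  have v: "v \<in> carrier_vec m" unfolding v_def by simp
  have "A *\<^sub>v ((C * A) *\<^sub>v v) = (A * (C * A)) *\<^sub>v v"
    by (rule assoc_mult_mat_vec[symmetric]) (use A C v in auto)
  also have "A * (C * A) = A" using A C AC by (simp add: assoc_mult_mat[symmetric])
  finally have "(C * A) *\<^sub>v v - v \<in> mat_kernel A"
    using A C v by (intro mat_kernelI[OF A]) (auto simp: mult_minus_distrib_mat_vec)
  then have "(C * A) *\<^sub>v v - v = 0\<^sub>v m" using inj by simp
  then have "(C * A) *\<^sub>v v = v"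
  proof (intro eq_vecI)
    fix i assume "i < dim_vec v"
    moreover assume "(C * A) *\<^sub>v v - v = 0\<^sub>v m"
    ultimately have "((C * A) *\<^sub>v v - v) $ i = 0" using v by simp
    then show "((C * A) *\<^sub>v v) $ i = v $ i" using \<open>i < dim_vec v\<close> A C v by simp
  qed (use A C v in simp)
  then show "(C * A) *\<^sub>v unit_vec m j = 1\<^sub>m m *\<^sub>v unit_vec m j" unfolding v_def by simp
qed (use A C in auto)

definition mat_sum :: "nat \<Rightarrow> nat \<Rightarrow> 'i set \<Rightarrow> ('i \<Rightarrow> 'a::comm_monoid_add mat) \<Rightarrow> 'a mat" where
  "mat_sum n m S M = mat n m (\<lambda>ij. \<Sum>g\<in>S. M g $$ ij)"

lemma mat_sum_carrier[simp]: "mat_sum n m S M \<in> carrier_mat n m"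
  unfolding mat_sum_def by simp

lemma dim_mat_sum[simp]: "dim_row (mat_sum n m S M) = n" "dim_col (mat_sum n m S M) = m"
  unfolding mat_sum_def by simp_all

lemma index_mat_sum[simp]: "i < n \<Longrightarrow> j < m \<Longrightarrow> mat_sum n m S M $$ (i, j) = (\<Sum>g\<in>S. M g $$ (i, j))"
  unfolding mat_sum_def by simp

lemma mult_mat_sum_left:
  fixes M :: "'i \<Rightarrow> 'a::comm_semiring_0 mat"
  assumes A: "A \<in> carrier_mat p n" and M: "\<And>g. g \<in> S \<Longrightarrow> M g \<in> carrier_mat n m"
  shows "A * mat_sum n m S M = mat_sum p m S (\<lambda>g. A * M g)"
proof (rule eq_matI)
  fix i j assume "i < dim_row (mat_sum p m S (\<lambda>g. A * M g))"
    and "j < dim_col (mat_sum p m S (\<lambda>g. A * M g))"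
  then have i: "i < p" and j: "j < m" by auto
  have "(A * mat_sum n m S M) $$ (i, j) = (\<Sum>k\<in>{0..<n}. A $$ (i, k) * (\<Sum>g\<in>S. M g $$ (k, j)))"
    using A i j by (simp add: scalar_prod_def)
  also have "\<dots> = (\<Sum>g\<in>S. \<Sum>k\<in>{0..<n}. A $$ (i, k) * M g $$ (k, j))"
    by (simp add: sum_distrib_left sum.swap[of _ S])
  also have "\<dots> = mat_sum p m S (\<lambda>g. A * M g) $$ (i, j)"
    using A M i j by (auto simp: scalar_prod_def carrier_matD[OF M] intro!: sum.cong)
  finally show "(A * mat_sum n m S M) $$ (i, j) = mat_sum p m S (\<lambda>g. A * M g) $$ (i, j)" .
qed (use A in auto)

lemma mult_mat_sum_right:
  fixes M :: "'i \<Rightarrow> 'a::comm_semiring_0 mat"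
  assumes A: "A \<in> carrier_mat m p" and M: "\<And>g. g \<in> S \<Longrightarrow> M g \<in> carrier_mat n m"
  shows "mat_sum n m S M * A = mat_sum n p S (\<lambda>g. M g * A)"
proof (rule eq_matI)
  fix i j assume "i < dim_row (mat_sum n p S (\<lambda>g. M g * A))"
    and "j < dim_col (mat_sum n p S (\<lambda>g. M g * A))"
  then have i: "i < n" and j: "j < p" by auto
  have "(mat_sum n m S M * A) $$ (i, j) = (\<Sum>k\<in>{0..<m}. (\<Sum>g\<in>S. M g $$ (i, k)) * A $$ (k, j))"
    using A i j by (simp add: scalar_prod_def)
  also have "\<dots> = (\<Sum>g\<in>S. \<Sum>k\<in>{0..<m}. M g $$ (i, k) * A $$ (k, j))"
    by (simp add: sum_distrib_right sum.swap[of _ S])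
  also have "\<dots> = mat_sum n p S (\<lambda>g. M g * A) $$ (i, j)"
    using A M i j by (auto simp: scalar_prod_def carrier_matD[OF M] intro!: sum.cong)
  finally show "(mat_sum n m S M * A) $$ (i, j) = mat_sum n p S (\<lambda>g. M g * A) $$ (i, j)" .
qed (use A in auto)

lemma mat_trace_mat_sum:
  assumes "\<And>g. g \<in> S \<Longrightarrow> M g \<in> carrier_mat n n"
  shows "mat_trace (mat_sum n n S M) = (\<Sum>g\<in>S. mat_trace (M g))"
proof -
  have "mat_trace (mat_sum n n S M) = (\<Sum>i<n. \<Sum>g\<in>S. M g $$ (i, i))"
    by (simp add: mat_trace_def)
  also have "\<dots> = (\<Sum>g\<in>S. \<Sum>i<n. M g $$ (i, i))" by (rule sum.swap)
  also have "\<dots> = (\<Sum>g\<in>S. mat_trace (M g))"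
    by (intro sum.cong refl) (simp add: mat_trace_def carrier_matD[OF assms])
  finally show ?thesis .
qed

definition mat_unit :: "nat \<Rightarrow> nat \<Rightarrow> nat \<Rightarrow> nat \<Rightarrow> 'a::{zero,one} mat" where
  "mat_unit n m j k = mat n m (\<lambda>(a, b). if a = j \<and> b = k then 1 else 0)"

lemma mat_unit_carrier[simp]: "mat_unit n m j k \<in> carrier_mat n m"
  unfolding mat_unit_def by simp

lemma mat_trace_mat_unit: "i < n \<Longrightarrow> k < n \<Longrightarrow> mat_trace (mat_unit n n i k) = (if i = k then 1 else 0)"
  unfolding mat_trace_def mat_unit_def by (simp add: sum.delta[of "{..<n}" k "\<lambda>_. 1"] cong: if_cong)

lemma mult_mat_unit_mult_index:
  fixes A :: "'a::comm_semiring_1 mat"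
  assumes A: "A \<in> carrier_mat p n" and B: "B \<in> carrier_mat m q"
    and "i < p" "j < n" "k < m" "l < q"
  shows "(A * mat_unit n m j k * B) $$ (i, l) = A $$ (i, j) * B $$ (k, l)"
proof -
  have AE: "A * mat_unit n m j k = mat p m (\<lambda>(i, b). if b = k then A $$ (i, j) else 0)"
    using A assms(3-5)
    by (intro eq_matI)
      (auto simp: mat_unit_def scalar_prod_def if_distrib[of "(*) _"] sum.delta cong: if_cong)
  show ?thesis
    unfolding AE using B assms(3-6)
    by (auto simp: scalar_prod_def if_distrib[of "\<lambda>x. x * _"] sum.delta cong: if_cong)
qed

definition block_upper_triangular :: "nat \<Rightarrow> 'a::zero mat \<Rightarrow> bool" where
  "block_upper_triangular k M \<longleftrightarrow> (\<forall>i j. j < k \<longrightarrow> k \<le> i \<longrightarrow> i < dim_row M \<longrightarrow> M $$ (i, j) = 0)"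

definition upper_left_block :: "nat \<Rightarrow> 'a mat \<Rightarrow> 'a mat" where
  "upper_left_block k M = mat k k (\<lambda>(i, j). M $$ (i, j))"

definition lower_right_block :: "nat \<Rightarrow> 'a mat \<Rightarrow> 'a mat" where
  "lower_right_block k M = mat (dim_row M - k) (dim_col M - k) (\<lambda>(i, j). M $$ (i + k, j + k))"

lemma dim_upper_left_block[simp]:
  "dim_row (upper_left_block k M) = k" "dim_col (upper_left_block k M) = k"
  unfolding upper_left_block_def by simp_all

lemma upper_left_block_carrier[simp]: "upper_left_block k M \<in> carrier_mat k k"
  unfolding upper_left_block_def by simp

lemma lower_right_block_carrier:
  "M \<in> carrier_mat n n \<Longrightarrow> lower_right_block k M \<in> carrier_mat (n - k) (n - k)"
  unfolding lower_right_block_def by auto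

lemma upper_left_block_one: "k \<le> n \<Longrightarrow> upper_left_block k (1\<^sub>m n) = 1\<^sub>m k"
  unfolding upper_left_block_def by (intro eq_matI) auto

lemma lower_right_block_one: "lower_right_block k (1\<^sub>m n) = 1\<^sub>m (n - k)"
  unfolding lower_right_block_def by (intro eq_matI) auto

lemma upper_left_block_mult:
  fixes A B :: "'a::comm_semiring_0 mat"
  assumes A: "A \<in> carrier_mat n n" and B: "B \<in> carrier_mat n n" and k: "k \<le> n"
    and tri: "block_upper_triangular k B"
  shows "upper_left_block k (A * B) = upper_left_block k A * upper_left_block k B"
proof (rule eq_matI)
  fix i j assume "i < dim_row (upper_left_block k A * upper_left_block k B)"
    "j < dim_col (upper_left_block k A * upper_left_block k B)"
  then have i: "i < k" and j: "j < k" by auto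
  have "(A * B) $$ (i, j) = (\<Sum>l\<in>{0..<n}. A $$ (i, l) * B $$ (l, j))"
    using A B i j k by (simp add: scalar_prod_def)
  also have "\<dots> = (\<Sum>l\<in>{0..<k}. A $$ (i, l) * B $$ (l, j))"
    using k B tri j by (intro sum.mono_neutral_right) (auto simp: block_upper_triangular_def)
  finally show "upper_left_block k (A * B) $$ (i, j)
      = (upper_left_block k A * upper_left_block k B) $$ (i, j)"
    using i j by (simp add: upper_left_block_def scalar_prod_def)
qed auto

lemma lower_right_block_mult:
  fixes A B :: "'a::comm_semiring_0 mat"
  assumes A: "A \<in> carrier_mat n n" and B: "B \<in> carrier_mat n n" and k: "k \<le> n"
    and tri: "block_upper_triangular k A"
  shows "lower_right_block k (A * B) = lower_right_block k A * lower_right_block k B"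
proof (rule eq_matI)
  fix i j assume "i < dim_row (lower_right_block k A * lower_right_block k B)"
    "j < dim_col (lower_right_block k A * lower_right_block k B)"
  then have i: "i < n - k" and j: "j < n - k" using A B by (auto simp: lower_right_block_def)
  have "(A * B) $$ (i + k, j + k) = (\<Sum>l\<in>{0..<n}. A $$ (i + k, l) * B $$ (l, j + k))"
    using A B i j by (simp add: scalar_prod_def)
  also have "\<dots> = (\<Sum>l\<in>{k..<n}. A $$ (i + k, l) * B $$ (l, j + k))"
    using A tri i by (intro sum.mono_neutral_right) (auto simp: block_upper_triangular_def)
  also have "\<dots> = (\<Sum>l\<in>{0..<n - k}. A $$ (i + k, l + k) * B $$ (l + k, j + k))"
    using k sum.shift_bounds_nat_ivl[of "\<lambda>l. A $$ (i + k, l) * B $$ (l, j + k)" 0 k "n - k"] by simp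
  finally show "lower_right_block k (A * B) $$ (i, j)
      = (lower_right_block k A * lower_right_block k B) $$ (i, j)"
    using A B i j by (simp add: lower_right_block_def scalar_prod_def)
qed (use A B in \<open>auto simp: lower_right_block_def\<close>)

lemma mat_trace_blocks:
  assumes M: "M \<in> carrier_mat n n" and k: "k \<le> n"
  shows "mat_trace M = mat_trace (upper_left_block k M) + mat_trace (lower_right_block k M)"
proof -
  have "mat_trace M = (\<Sum>i\<in>{0..<k}. M $$ (i, i)) + (\<Sum>i\<in>{k..<n}. M $$ (i, i))"
    using M k by (simp add: mat_trace_def lessThan_atLeast0 sum.atLeastLessThan_concat)
  also have "(\<Sum>i\<in>{k..<n}. M $$ (i, i)) = (\<Sum>i\<in>{0..<n - k}. M $$ (i + k, i + k))"
    using k sum.shift_bounds_nat_ivl[of "\<lambda>i. M $$ (i, i)" 0 k "n - k"] by simp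
  finally show ?thesis
    using M
    by (simp add: mat_trace_def upper_left_block_def lower_right_block_def lessThan_atLeast0)
qed

section \<open>Adapted bases of subspaces\<close>

lemma subspace_vec_submodule:
  "subspace_vec n W \<Longrightarrow> submodule class_ring W (module_vec TYPE(complex) n)"
  unfolding subspace_vec_def submodule_def
  using vec_module[where ?'a = complex and n = n]
  by (auto simp: module_vec_simps class_ring_simps)

context vec_space
begin

lemma submodule_spanned_by_lin_indpt:
  assumes W: "submodule class_ring W V"
  obtains A where "finite A" "A \<subseteq> W" "lin_indpt A" "span A = W"
proof -
  have WC: "W \<subseteq> carrier_vec n" using W unfolding submodule_def by simp
  let ?P = "\<lambda>T. T \<subseteq> W \<and> lin_indpt T"
  have "?P T \<Longrightarrow> finite T \<and> card T \<le> n" for T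
    using WC li_le_dim dim_is_n fin_dim by (metis subset_trans)
  moreover have "?P {}" unfolding lin_dep_def by auto
  ultimately obtain A where "finite A" and max: "maximal A ?P"
    using maximal_exists[of ?P n "{}"] by blast
  then have AW: "A \<subseteq> W" and li: "lin_indpt A" and AC: "A \<subseteq> carrier_vec n"
    using WC unfolding maximal_def by auto
  have "W \<subseteq> span A"
  proof
    fix w assume w: "w \<in> W"
    show "w \<in> span A"
    proof (rule ccontr)
      assume nw: "w \<notin> span A"
      then have wA: "w \<notin> A" using in_own_span[OF AC] by auto
      have "lin_indpt (A \<union> {w})"
        using lin_dep_iff_in_span[OF AC li _ wA] nw w WC by auto
      then have "A \<union> {w} = A"
        using max AW w unfolding maximal_def
        by (metis Un_upper1 insert_subset Un_insert_right sup_bot.right_neutral)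
      with wA show False by auto
    qed
  qed
  then have "span A = W" using span_is_subset[OF AW W] by blast
  with \<open>finite A\<close> AW li show ?thesis by (rule that)
qed

lemma lin_indpt_extends_to_basis:
  assumes AC: "A \<subseteq> carrier_vec n" and li: "lin_indpt A"
  obtains B where "finite B" "A \<subseteq> B" "basis B" "card B = n"
proof -
  let ?P = "\<lambda>T. A \<subseteq> T \<and> T \<subseteq> carrier_vec n \<and> lin_indpt T"
  have "?P T \<Longrightarrow> finite T \<and> card T \<le> n" for T
    using li_le_dim dim_is_n fin_dim by metis
  then obtain B where B: "finite B" "maximal B ?P" using maximal_exists[of ?P n A] AC li by blast
  then have AB: "A \<subseteq> B" unfolding maximal_def by simp
  have "maximal B (\<lambda>T. T \<subseteq> carrier_vec n \<and> lin_indpt T)"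
    unfolding maximal_def
  proof (intro conjI allI impI)
    show "B \<subseteq> carrier_vec n" "lin_indpt B" using B(2) unfolding maximal_def by simp_all
    fix T assume "B \<subseteq> T \<and> T \<subseteq> carrier_vec n \<and> lin_indpt T"
    with AB B(2) show "T = B" unfolding maximal_def by (meson subset_trans)
  qed
  then have "basis B" by (rule max_li_is_basis)
  moreover have "card B = n" using dim_basis[OF B(1) \<open>basis B\<close>] dim_is_n by simp
  ultimately show ?thesis using B(1) AB that by blast
qed

lemma mat_of_cols_mult_vec_eq_span:
  assumes bs: "set bs \<subseteq> carrier_vec n" "distinct bs" and v: "v \<in> span (set bs)"
  obtains c where "c \<in> carrier_vec (length bs)" "mat_of_cols n bs *\<^sub>v c = v"
proof -
  obtain a where a: "lincomb a (set bs) = v" using finite_in_span[OF _ bs(1) v] by auto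
  have P: "mat_of_cols n bs \<in> carrier_mat n (length bs)" by simp
  have "cols (mat_of_cols n bs) = bs" using bs(1) by (simp add: cols_mat_of_cols)
  then have "mat_of_cols n bs *\<^sub>v vec (length bs) (\<lambda>i. a (col (mat_of_cols n bs) i)) = v"
    using mat_mult_eq_lincomb[OF P] bs a by simp
  then show ?thesis by (intro that) auto
qed

end

lemma mat_of_cols_mult_unit_vec:
  fixes bs :: "'a::semiring_1 vec list"
  assumes "j < length bs" "bs ! j \<in> carrier_vec n"
  shows "mat_of_cols n bs *\<^sub>v unit_vec (length bs) j = bs ! j"
proof (rule eq_vecI)
  fix i assume "i < dim_vec (bs ! j)"
  then have i: "i < n" using assms(2) by simp
  have "mat_of_cols n bs \<in> carrier_mat n (length bs)" by simp
  then show "(mat_of_cols n bs *\<^sub>v unit_vec (length bs) j) $ i = bs ! j $ i"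
    using i assms(1) by (simp add: mat_of_cols_index)
qed (use assms in simp)

lemma mat_of_cols_append_mult_vec:
  fixes as cs :: "'a::comm_semiring_0 vec list"
  assumes c: "c \<in> carrier_vec (length as)"
  shows "mat_of_cols n (as @ cs) *\<^sub>v (c @\<^sub>v 0\<^sub>v (length cs)) = mat_of_cols n as *\<^sub>v c"
proof (rule eq_vecI)
  fix i assume "i < dim_vec (mat_of_cols n as *\<^sub>v c)"
  then have i: "i < n" by simp
  let ?k = "length as" and ?l = "length cs"
  have "(mat_of_cols n (as @ cs) *\<^sub>v (c @\<^sub>v 0\<^sub>v ?l)) $ i
      = (\<Sum>j\<in>{0..<?k + ?l}. (as @ cs) ! j $ i * (if j < ?k then c $ j else 0))"
    using i c by (auto simp: scalar_prod_def mat_of_cols_index intro!: sum.cong)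
  also have "\<dots> = (\<Sum>j\<in>{0..<?k}. as ! j $ i * c $ j)"
    by (subst sum.mono_neutral_right[of "{0..<?k + ?l}" "{0..<?k}"]) (auto simp: nth_append)
  also have "\<dots> = (mat_of_cols n as *\<^sub>v c) $ i"
    using i c by (auto simp: scalar_prod_def mat_of_cols_index intro!: sum.cong)
  finally show "(mat_of_cols n (as @ cs) *\<^sub>v (c @\<^sub>v 0\<^sub>v ?l)) $ i = (mat_of_cols n as *\<^sub>v c) $ i" .
qed simp

lemma subspace_vec_basis_lists:
  assumes W: "subspace_vec n W" and W0: "W \<noteq> {0\<^sub>v n}" and WC: "W \<noteq> carrier_vec n"
  obtains as cs :: "complex vec list"
  where "as \<noteq> []" "cs \<noteq> []" "length (as @ cs) = n" "set as \<subseteq> W" "set cs \<subseteq> carrier_vec n"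
    "\<And>w. w \<in> W \<Longrightarrow> \<exists>c\<in>carrier_vec (length as). mat_of_cols n as *\<^sub>v c = w"
    "\<And>v. v \<in> carrier_vec n \<Longrightarrow> \<exists>c\<in>carrier_vec n. mat_of_cols n (as @ cs) *\<^sub>v c = v"
proof -
  interpret V: vec_space "TYPE(complex)" n .
  have Wsub: "W \<subseteq> carrier_vec n" using W unfolding subspace_vec_def by simp
  obtain A where A: "finite A" "A \<subseteq> W" "V.lin_indpt A" "V.span A = W"
    using V.submodule_spanned_by_lin_indpt[OF subspace_vec_submodule[OF W]] .
  obtain B where B: "finite B" "A \<subseteq> B" "V.basis B" "card B = n"
    using V.lin_indpt_extends_to_basis[of A] A Wsub by blast
  have BC: "B \<subseteq> carrier_vec n" and spanB: "V.span B = carrier_vec n"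
    using B(3) unfolding V.basis_def by auto
  obtain as where as: "distinct as" "set as = A" using finite_distinct_list[OF A(1)] by blast
  obtain cs where cs: "distinct cs" "set cs = B - A"
    using finite_distinct_list[of "B - A"] B(1) by blast
  have bs: "distinct (as @ cs)" "set (as @ cs) = B" using as cs B(2) by auto
  have len: "length (as @ cs) = n" using bs B(4) distinct_card by metis
  have "as \<noteq> []"
  proof
    assume "as = []"
    then have "W = {0\<^sub>v n}" using as A(4) V.span_empty by simp
    with W0 show False ..
  qed
  moreover have "cs \<noteq> []"
  proof
    assume "cs = []"
    then have "A = B" using cs B(2) by auto
    then have "W = carrier_vec n" using A(4) spanB by simp
    with WC show False ..
  qed
  moreover note len
  moreover have "set as \<subseteq> W" "set cs \<subseteq> carrier_vec n" using as A(2) cs BC by auto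
  moreover have "\<exists>c\<in>carrier_vec (length as). mat_of_cols n as *\<^sub>v c = w" if w: "w \<in> W" for w
  proof -
    have "set as \<subseteq> carrier_vec n" "w \<in> V.span (set as)" using as A Wsub w by auto
    then obtain c where "c \<in> carrier_vec (length as)" "mat_of_cols n as *\<^sub>v c = w"
      by (rule V.mat_of_cols_mult_vec_eq_span[OF _ as(1)])
    then show ?thesis by blast
  qed
  moreover have "\<exists>c\<in>carrier_vec n. mat_of_cols n (as @ cs) *\<^sub>v c = v"
    if v: "v \<in> carrier_vec n" for v
  proof -
    have "set (as @ cs) \<subseteq> carrier_vec n" "v \<in> V.span (set (as @ cs))" using bs BC spanB v by auto
    then obtain c where "c \<in> carrier_vec (length (as @ cs))" "mat_of_cols n (as @ cs) *\<^sub>v c = v"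
      by (rule V.mat_of_cols_mult_vec_eq_span[OF _ bs(1)])
    then show ?thesis using len by auto
  qed
  ultimately show ?thesis by (rule that)
qed

lemma subspace_vec_adapted_basis:
  assumes W: "subspace_vec n W" and W0: "W \<noteq> {0\<^sub>v n}" and WC: "W \<noteq> carrier_vec n"
  obtains k and P Q :: "complex mat"
  where "0 < k" "k < n" "P \<in> carrier_mat n n" "Q \<in> carrier_mat n n" "P * Q = 1\<^sub>m n" "Q * P = 1\<^sub>m n"
    "\<And>j. j < k \<Longrightarrow> P *\<^sub>v unit_vec n j \<in> W"
    "\<And>w. w \<in> W \<Longrightarrow> \<exists>c\<in>carrier_vec n. P *\<^sub>v c = w \<and> (\<forall>i\<in>{k..<n}. c $ i = 0)"
proof -
  obtain as cs where lists: "as \<noteq> []" "cs \<noteq> []" "length (as @ cs) = n" "set as \<subseteq> W"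
    "set cs \<subseteq> carrier_vec n"
    and span_as: "\<And>w. w \<in> W \<Longrightarrow> \<exists>c\<in>carrier_vec (length as). mat_of_cols n as *\<^sub>v c = w"
    and span_bs: "\<And>v. v \<in> carrier_vec n \<Longrightarrow> \<exists>c\<in>carrier_vec n. mat_of_cols n (as @ cs) *\<^sub>v c = v"
    using subspace_vec_basis_lists[OF W W0 WC] by blast
  have Wsub: "W \<subseteq> carrier_vec n" using W unfolding subspace_vec_def by simp
  define k where "k = length as"
  define P where "P = mat_of_cols n (as @ cs)"
  have P: "P \<in> carrier_mat n n" unfolding P_def using lists(3) by (metis mat_of_cols_carrier(1))
  have "(*\<^sub>v) P ` carrier_vec n = carrier_vec n"
    using P span_bs unfolding P_def by fastforce
  then obtain Q where Q: "Q \<in> carrier_mat n n" and PQ: "P * Q = 1\<^sub>m n"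
    using mat_right_inverse_if_surj[OF P] by blast
  have QP: "Q * P = 1\<^sub>m n" by (rule mat_mult_left_right_inverse[OF P Q PQ])
  have "0 < k" "k < n" using lists unfolding k_def by auto
  moreover note P Q PQ QP
  moreover have "P *\<^sub>v unit_vec n j \<in> W" if j: "j < k" for j
  proof -
    have "(as @ cs) ! j = as ! j" "as ! j \<in> W"
      using j lists(4) unfolding k_def by (auto simp: nth_append)
    then show ?thesis
      using mat_of_cols_mult_unit_vec[of j "as @ cs" n] j Wsub lists(3)
      unfolding P_def k_def by auto
  qed
  moreover have "\<exists>c\<in>carrier_vec n. P *\<^sub>v c = w \<and> (\<forall>i\<in>{k..<n}. c $ i = 0)" if w: "w \<in> W" for w
  proof -
    obtain c where c: "c \<in> carrier_vec k" "mat_of_cols n as *\<^sub>v c = w"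
      using span_as[OF w] unfolding k_def by blast
    show ?thesis
      using mat_of_cols_append_mult_vec[of c as n cs] c lists(3)
      by (intro bexI[of _ "c @\<^sub>v 0\<^sub>v (length cs)"]) (auto simp: P_def k_def)
  qed
  ultimately show ?thesis by (rule that)
qed

section \<open>Representations and Schur's lemma\<close>

context group
begin

lemma complex_rep_carrier: "complex_rep G n \<rho> \<Longrightarrow> g \<in> carrier G \<Longrightarrow> \<rho> g \<in> carrier_mat n n"
  unfolding complex_rep_def by auto

lemma complex_rep_mult:
  "complex_rep G n \<rho> \<Longrightarrow> g \<in> carrier G \<Longrightarrow> h \<in> carrier G \<Longrightarrow> \<rho> (g \<otimes> h) = \<rho> g * \<rho> h"
  unfolding complex_rep_def by auto

lemma complex_rep_one: "complex_rep G n \<rho> \<Longrightarrow> \<rho> \<one> = 1\<^sub>m n"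
  unfolding complex_rep_def by auto

lemma complex_rep_dim_pos: "complex_rep G n \<rho> \<Longrightarrow> 0 < n"
  unfolding complex_rep_def by auto

lemma complex_rep_inv_left: "complex_rep G n \<rho> \<Longrightarrow> g \<in> carrier G \<Longrightarrow> \<rho> (inv g) * \<rho> g = 1\<^sub>m n"
  by (metis complex_rep_mult complex_rep_one inv_closed l_inv)

lemma complex_repI:
  assumes n: "0 < n" and carrier: "\<And>g. g \<in> carrier G \<Longrightarrow> \<rho> g \<in> carrier_mat n n"
    and mult: "\<And>g h. g \<in> carrier G \<Longrightarrow> h \<in> carrier G \<Longrightarrow> \<rho> (g \<otimes> h) = \<rho> g * \<rho> h"
    and one: "\<rho> \<one> = 1\<^sub>m n"
  shows "complex_rep G n \<rho>"
  unfolding complex_rep_def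
proof (intro conjI ballI n one mult)
  fix g assume g: "g \<in> carrier G"
  show "\<rho> g \<in> carrier_mat n n" using carrier[OF g] .
  have "\<rho> g * \<rho> (inv g) = 1\<^sub>m n" "\<rho> (inv g) * \<rho> g = 1\<^sub>m n"
    using mult[OF g inv_closed[OF g]] mult[OF inv_closed[OF g] g] one g by simp_all
  then show "invertible_mat (\<rho> g)"
    unfolding invertible_mat_def inverts_mat_def using carrier[OF g] carrier[OF inv_closed[OF g]]
    by (auto simp: square_mat.simps)
qed

lemma character_one: "complex_rep G n \<rho> \<Longrightarrow> character G \<rho> \<one> = of_nat n"
  unfolding character_def mat_trace_def by (simp add: complex_rep_one)

lemma irreducible_rep_complex_rep: "irreducible_rep G n \<rho> \<Longrightarrow> complex_rep G n \<rho>"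
  unfolding irreducible_rep_def by auto

lemma irreducible_rep_invariant_subspace:
  assumes "irreducible_rep G n \<rho>" "subspace_vec n W"
    and "\<And>g w. g \<in> carrier G \<Longrightarrow> w \<in> W \<Longrightarrow> \<rho> g *\<^sub>v w \<in> W"
  shows "W = {0\<^sub>v n} \<or> W = carrier_vec n"
  using assms unfolding irreducible_rep_def by blast

lemma character_eq_if_similar:
  assumes r: "complex_rep G n \<rho>" and s: "complex_rep G m \<sigma>"
    and A: "A \<in> carrier_mat n m" and C: "C \<in> carrier_mat m n"
    and CA: "C * A = 1\<^sub>m m" and AC: "A * C = 1\<^sub>m n"
    and comm: "\<And>h. h \<in> carrier G \<Longrightarrow> \<rho> h * A = A * \<sigma> h"
  shows "character G \<rho> = character G \<sigma>"
proof
  fix g show "character G \<rho> g = character G \<sigma> g"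
  proof (cases "g \<in> carrier G")
    case g: True
    have rg: "\<rho> g \<in> carrier_mat n n" and sg: "\<sigma> g \<in> carrier_mat m m"
      using complex_rep_carrier r s g by auto
    have "mat_trace (\<sigma> g) = mat_trace (C * (A * \<sigma> g))"
      using CA C A sg by (simp add: assoc_mult_mat[symmetric])
    also have "\<dots> = mat_trace (C * (\<rho> g * A))" using comm[OF g] by simp
    also have "\<dots> = mat_trace (\<rho> g * A * C)" using C A rg by (intro mat_trace_mult_comm) auto
    also have "\<dots> = mat_trace (\<rho> g)" using AC C A rg by (simp add: assoc_mult_mat)
    finally show ?thesis unfolding character_def using g by simp
  qed (simp add: character_def)
qed

lemma complex_rep_conjugate:
  assumes r: "complex_rep G n \<rho>" and P: "P \<in> carrier_mat n n" and Q: "Q \<in> carrier_mat n n"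
    and PQ: "P * Q = 1\<^sub>m n" and QP: "Q * P = 1\<^sub>m n"
  shows "complex_rep G n (\<lambda>g. Q * \<rho> g * P)" "character G (\<lambda>g. Q * \<rho> g * P) = character G \<rho>"
proof -
  have rg: "\<And>g. g \<in> carrier G \<Longrightarrow> \<rho> g \<in> carrier_mat n n" using r by (rule complex_rep_carrier)
  have conj: "Q * \<rho> g * P = Q * (\<rho> g * P)" if "g \<in> carrier G" for g
    by (rule assoc_mult_mat[OF Q rg[OF that] P])
  have cancel: "P * (Q * (\<rho> g * P)) = \<rho> g * P" if g: "g \<in> carrier G" for g
  proof -
    have X: "\<rho> g * P \<in> carrier_mat n n" using P rg[OF g] by simp
    have "P * (Q * (\<rho> g * P)) = (P * Q) * (\<rho> g * P)" by (rule assoc_mult_mat[symmetric, OF P Q X])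
    also have "\<dots> = \<rho> g * P" unfolding PQ by (rule left_mult_one_mat[OF X])
    finally show ?thesis .
  qed
  have conj_mult: "Q * \<rho> (g \<otimes> h) * P = Q * \<rho> g * P * (Q * \<rho> h * P)"
    if g: "g \<in> carrier G" and h: "h \<in> carrier G" for g h
  proof -
    have gP: "\<rho> g * P \<in> carrier_mat n n" and QhP: "Q * (\<rho> h * P) \<in> carrier_mat n n"
      using P Q rg[OF g] rg[OF h] by auto
    have "Q * \<rho> g * P * (Q * \<rho> h * P) = Q * ((\<rho> g * P) * (Q * (\<rho> h * P)))"
      unfolding conj[OF g] conj[OF h] by (rule assoc_mult_mat[OF Q gP QhP])
    also have "(\<rho> g * P) * (Q * (\<rho> h * P)) = \<rho> g * (P * (Q * (\<rho> h * P)))"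
      by (rule assoc_mult_mat[OF rg[OF g] P QhP])
    also have "\<rho> g * (P * (Q * (\<rho> h * P))) = \<rho> (g \<otimes> h) * P"
      unfolding cancel[OF h] complex_rep_mult[OF r g h]
      by (rule assoc_mult_mat[symmetric, OF rg[OF g] rg[OF h] P])
    finally show ?thesis using conj[OF m_closed[OF g h]] by simp
  qed
  show conjugate: "complex_rep G n (\<lambda>g. Q * \<rho> g * P)"
  proof (rule complex_repI)
    show "0 < n" using complex_rep_dim_pos[OF r] .
    show "Q * \<rho> \<one> * P = 1\<^sub>m n" using Q QP by (simp add: complex_rep_one[OF r])
  qed (use P Q rg conj_mult in auto)
  have "\<rho> h * P = P * (Q * \<rho> h * P)" if h: "h \<in> carrier G" for h
    using cancel[OF h] conj[OF h] by simp
  then show "character G (\<lambda>g. Q * \<rho> g * P) = character G \<rho>"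
    using character_eq_if_similar[OF r conjugate P Q QP PQ] by simp
qed

lemma mat_sum_reindex_mult_left:
  assumes h: "h \<in> carrier G"
  shows "mat_sum n m (carrier G) (\<lambda>g. F (h \<otimes> g)) = mat_sum n m (carrier G) F"
proof -
  have "bij_betw ((\<otimes>) h) (carrier G) (carrier G)"
    using h by (simp add: bij_betw_def inj_on_cmult surj_const_mult)
  from sum.reindex_bij_betw[OF this, of "\<lambda>g. F g $$ _"] show ?thesis
    unfolding mat_sum_def by simp
qed

definition rep_average ::
    "('a \<Rightarrow> complex mat) \<Rightarrow> ('a \<Rightarrow> complex mat) \<Rightarrow> nat \<Rightarrow> nat \<Rightarrow> complex mat \<Rightarrow> complex mat"
  where "rep_average \<rho> \<sigma> n m X = mat_sum n m (carrier G) (\<lambda>g. \<rho> g * X * \<sigma> (inv g))"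

lemma rep_average_carrier[simp]: "rep_average \<rho> \<sigma> n m X \<in> carrier_mat n m"
  unfolding rep_average_def by simp

lemma rep_average_intertwines:
  assumes r: "complex_rep G n \<rho>" and s: "complex_rep G m \<sigma>" and X: "X \<in> carrier_mat n m"
    and h: "h \<in> carrier G"
  shows "\<rho> h * rep_average \<rho> \<sigma> n m X = rep_average \<rho> \<sigma> n m X * \<sigma> h"
proof -
  have rg: "\<And>g. g \<in> carrier G \<Longrightarrow> \<rho> g \<in> carrier_mat n n" using r by (rule complex_rep_carrier)
  have sg: "\<And>g. g \<in> carrier G \<Longrightarrow> \<sigma> g \<in> carrier_mat m m" using s by (rule complex_rep_carrier)
  have summand: "\<And>g. g \<in> carrier G \<Longrightarrow> \<rho> g * X * \<sigma> (inv g) \<in> carrier_mat n m"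
    using rg sg X by (meson inv_closed mult_carrier_mat)
  define F where "F = (\<lambda>g. \<rho> g * X * \<sigma> (inv g \<otimes> h))"
  have shift: "\<rho> h * (\<rho> g * X * \<sigma> (inv g)) = F (h \<otimes> g)" if g: "g \<in> carrier G" for g
  proof -
    have "inv (h \<otimes> g) \<otimes> h = inv g" using g h by (simp add: inv_mult_group m_assoc)
    then have "F (h \<otimes> g) = \<rho> h * \<rho> g * X * \<sigma> (inv g)"
      unfolding F_def complex_rep_mult[OF r h g] by simp
    also have "\<dots> = \<rho> h * (\<rho> g * X * \<sigma> (inv g))"
      unfolding assoc_mult_mat[OF rg[OF h] rg[OF g] X]
      by (rule assoc_mult_mat) (use rg[OF h] rg[OF g] X sg[OF inv_closed[OF g]] in auto)
    finally show ?thesis by simp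
  qed
  have unshift: "F g = \<rho> g * X * \<sigma> (inv g) * \<sigma> h" if g: "g \<in> carrier G" for g
    unfolding F_def complex_rep_mult[OF s inv_closed[OF g] h]
    by (rule assoc_mult_mat[symmetric]) (use rg[OF g] X sg[OF inv_closed[OF g]] sg[OF h] in auto)
  have "\<rho> h * rep_average \<rho> \<sigma> n m X = mat_sum n m (carrier G) (\<lambda>g. \<rho> h * (\<rho> g * X * \<sigma> (inv g)))"
    unfolding rep_average_def by (rule mult_mat_sum_left[OF rg[OF h] summand])
  also have "\<dots> = mat_sum n m (carrier G) (\<lambda>g. F (h \<otimes> g))"
    using shift by (simp add: mat_sum_def)
  also have "\<dots> = mat_sum n m (carrier G) F" by (rule mat_sum_reindex_mult_left[OF h])
  also have "\<dots> = mat_sum n m (carrier G) (\<lambda>g. \<rho> g * X * \<sigma> (inv g) * \<sigma> h)"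
    using unshift by (simp add: mat_sum_def)
  also have "\<dots> = rep_average \<rho> \<sigma> n m X * \<sigma> h"
    unfolding rep_average_def by (rule mult_mat_sum_right[symmetric, OF sg[OF h] summand])
  finally show ?thesis .
qed

lemma mat_trace_rep_average:
  assumes r: "complex_rep G n \<rho>" and X: "X \<in> carrier_mat n n"
  shows "mat_trace (rep_average \<rho> \<rho> n n X) = of_nat (card (carrier G)) * mat_trace X"
proof -
  have rg: "\<And>g. g \<in> carrier G \<Longrightarrow> \<rho> g \<in> carrier_mat n n" using r by (rule complex_rep_carrier)
  have "mat_trace (\<rho> g * X * \<rho> (inv g)) = mat_trace X" if g: "g \<in> carrier G" for g
  proof -
    have "mat_trace (\<rho> g * X * \<rho> (inv g)) = mat_trace (\<rho> (inv g) * (\<rho> g * X))"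
      using rg[OF g] rg[OF inv_closed[OF g]] X by (intro mat_trace_mult_comm) auto
    also have "\<rho> (inv g) * (\<rho> g * X) = X"
      using rg[OF g] rg[OF inv_closed[OF g]] X complex_rep_inv_left[OF r g]
      by (simp add: assoc_mult_mat[symmetric])
    finally show ?thesis .
  qed
  moreover have "\<rho> g * X * \<rho> (inv g) \<in> carrier_mat n n" if "g \<in> carrier G" for g
    using rg[OF that] rg[OF inv_closed[OF that]] X by simp
  ultimately show ?thesis
    unfolding rep_average_def by (subst mat_trace_mat_sum) auto
qed

lemma rep_average_mat_unit_index:
  assumes r: "complex_rep G n \<rho>" and s: "complex_rep G m \<sigma>"
    and "i < n" "j < n" "k < m" "l < m"
  shows "rep_average \<rho> \<sigma> n m (mat_unit n m j k) $$ (i, l)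
    = (\<Sum>g\<in>carrier G. \<rho> g $$ (i, j) * \<sigma> (inv g) $$ (k, l))"
  unfolding rep_average_def using assms
  by (auto intro!: sum.cong mult_mat_unit_mult_index complex_rep_carrier)

lemma intertwiner_kernel_invariant:
  assumes r: "complex_rep G n \<rho>" and s: "complex_rep G m \<sigma>" and A: "A \<in> carrier_mat n m"
    and comm: "\<And>h. h \<in> carrier G \<Longrightarrow> \<rho> h * A = A * \<sigma> h"
    and g: "g \<in> carrier G" and w: "w \<in> mat_kernel A"
  shows "\<sigma> g *\<^sub>v w \<in> mat_kernel A"
proof -
  have rg: "\<rho> g \<in> carrier_mat n n" and sg: "\<sigma> g \<in> carrier_mat m m"
    using complex_rep_carrier r s g by auto
  have wc: "w \<in> carrier_vec m" and Aw: "A *\<^sub>v w = 0\<^sub>v n" using mat_kernelD[OF A w] by auto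
  have "A *\<^sub>v (\<sigma> g *\<^sub>v w) = (\<rho> g * A) *\<^sub>v w"
    using A sg wc comm[OF g] by (simp add: assoc_mult_mat_vec)
  also have "\<dots> = \<rho> g *\<^sub>v (A *\<^sub>v w)" using A rg wc by (simp add: assoc_mult_mat_vec)
  also have "\<dots> = 0\<^sub>v n" using rg Aw by auto
  finally show ?thesis using A sg wc by (intro mat_kernelI) auto
qed

lemma intertwiner_image_invariant:
  assumes r: "complex_rep G n \<rho>" and s: "complex_rep G m \<sigma>" and A: "A \<in> carrier_mat n m"
    and comm: "\<And>h. h \<in> carrier G \<Longrightarrow> \<rho> h * A = A * \<sigma> h"
    and g: "g \<in> carrier G" and w: "w \<in> (*\<^sub>v) A ` carrier_vec m"
  shows "\<rho> g *\<^sub>v w \<in> (*\<^sub>v) A ` carrier_vec m"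
proof -
  have rg: "\<rho> g \<in> carrier_mat n n" and sg: "\<sigma> g \<in> carrier_mat m m"
    using complex_rep_carrier r s g by auto
  obtain v where v: "v \<in> carrier_vec m" and wv: "w = A *\<^sub>v v" using w by blast
  have "\<rho> g *\<^sub>v w = (\<rho> g * A) *\<^sub>v v" using A rg v wv by (simp add: assoc_mult_mat_vec)
  also have "\<dots> = (A * \<sigma> g) *\<^sub>v v" using comm[OF g] by simp
  also have "\<dots> = A *\<^sub>v (\<sigma> g *\<^sub>v v)" using A sg v by (simp add: assoc_mult_mat_vec)
  finally show ?thesis using sg v by simp
qed

lemma intertwiner_kernel_trivial:
  assumes r: "complex_rep G n \<rho>" and irr: "irreducible_rep G m \<sigma>" and A: "A \<in> carrier_mat n m"
    and comm: "\<And>h. h \<in> carrier G \<Longrightarrow> \<rho> h * A = A * \<sigma> h" and nz: "A \<noteq> 0\<^sub>m n m"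
  shows "mat_kernel A = {0\<^sub>v m}"
proof -
  have "mat_kernel A \<noteq> carrier_vec m" using mat_zero_if_kernel_full[OF A] nz by blast
  then show ?thesis
    using irreducible_rep_invariant_subspace[OF irr subspace_vec_mat_kernel[OF A]]
      intertwiner_kernel_invariant[OF r irreducible_rep_complex_rep[OF irr] A comm] by blast
qed

lemma intertwiner_surj:
  assumes irr: "irreducible_rep G n \<rho>" and s: "complex_rep G m \<sigma>" and A: "A \<in> carrier_mat n m"
    and comm: "\<And>h. h \<in> carrier G \<Longrightarrow> \<rho> h * A = A * \<sigma> h" and nz: "A \<noteq> 0\<^sub>m n m"
  shows "(*\<^sub>v) A ` carrier_vec m = carrier_vec n"
proof -
  have "(*\<^sub>v) A ` carrier_vec m \<noteq> {0\<^sub>v n}" using mat_zero_if_image_zero[OF A] nz by blast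
  then show ?thesis
    using irreducible_rep_invariant_subspace[OF irr subspace_vec_mat_image[OF A]]
      intertwiner_image_invariant[OF irreducible_rep_complex_rep[OF irr] s A comm] by blast
qed

theorem schur_character_eq:
  assumes irr: "irreducible_rep G n \<rho>" and irs: "irreducible_rep G m \<sigma>"
    and A: "A \<in> carrier_mat n m" and comm: "\<And>h. h \<in> carrier G \<Longrightarrow> \<rho> h * A = A * \<sigma> h"
    and nz: "A \<noteq> 0\<^sub>m n m"
  shows "character G \<rho> = character G \<sigma>"
proof -
  have r: "complex_rep G n \<rho>" and s: "complex_rep G m \<sigma>"
    using irr irs by (auto intro: irreducible_rep_complex_rep)
  obtain C where C: "C \<in> carrier_mat m n" and AC: "A * C = 1\<^sub>m n"
    using mat_right_inverse_if_surj[OF A intertwiner_surj[OF irr s A comm nz]] .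
  have CA: "C * A = 1\<^sub>m m"
    using mat_left_inverse_if_inj[OF A C AC intertwiner_kernel_trivial[OF r irs A comm nz]] .
  show ?thesis by (rule character_eq_if_similar[OF r s A C CA AC comm])
qed

theorem schur_scalar:
  assumes irr: "irreducible_rep G n \<rho>" and A: "A \<in> carrier_mat n n"
    and comm: "\<And>h. h \<in> carrier G \<Longrightarrow> \<rho> h * A = A * \<rho> h"
  obtains c where "A = c \<cdot>\<^sub>m 1\<^sub>m n"
proof -
  have r: "complex_rep G n \<rho>" using irr by (rule irreducible_rep_complex_rep)
  have rg: "\<And>g. g \<in> carrier G \<Longrightarrow> \<rho> g \<in> carrier_mat n n" using r by (rule complex_rep_carrier)
  obtain c where "c \<in> spectrum A" using spectrum_non_empty[OF A complex_rep_dim_pos[OF r]] by auto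
  then obtain v where v: "v \<in> carrier_vec n" "v \<noteq> 0\<^sub>v n" "A *\<^sub>v v = c \<cdot>\<^sub>v v"
    using A unfolding spectrum_def eigenvalue_def eigenvector_def by auto
  define B where "B = A - c \<cdot>\<^sub>m 1\<^sub>m n"
  have B: "B \<in> carrier_mat n n" unfolding B_def using A by (intro minus_carrier_mat) auto
  have "\<rho> h * B = B * \<rho> h" if h: "h \<in> carrier G" for h
    unfolding B_def using A rg[OF h] comm[OF h]
    by (simp add: mult_minus_distrib_mat minus_mult_distrib_mat
        mult_smult_distrib[OF rg[OF h] one_carrier_mat]
        mult_smult_assoc_mat[OF one_carrier_mat rg[OF h]])
  moreover have "B *\<^sub>v v = 0\<^sub>v n"
    unfolding B_def using A v by (auto simp: minus_mult_distrib_mat_vec)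
  then have "v \<in> mat_kernel B" using B v(1) by (intro mat_kernelI)
  ultimately have "B = 0\<^sub>m n n"
    using intertwiner_kernel_trivial[OF r irr B] v(2) by blast
  have "A = c \<cdot>\<^sub>m 1\<^sub>m n"
  proof (rule eq_matI)
    fix i j assume ij: "i < dim_row (c \<cdot>\<^sub>m 1\<^sub>m n)" "j < dim_col (c \<cdot>\<^sub>m 1\<^sub>m n)"
    with \<open>B = 0\<^sub>m n n\<close> have "B $$ (i, j) = 0" by simp
    then show "A $$ (i, j) = (c \<cdot>\<^sub>m 1\<^sub>m n) $$ (i, j)" unfolding B_def using A ij by auto
  qed (use A in auto)
  then show ?thesis by (rule that)
qed

section \<open>Orthogonality relations\<close>

lemma character_inner_eq_rep_average_sum:
  assumes r: "complex_rep G n \<rho>" and s: "complex_rep G m \<sigma>"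
  shows "(\<Sum>g\<in>carrier G. character G \<rho> g * character G \<sigma> (inv g))
       = (\<Sum>i<n. \<Sum>k<m. rep_average \<rho> \<sigma> n m (mat_unit n m i k) $$ (i, k))"
proof -
  have "(\<Sum>g\<in>carrier G. character G \<rho> g * character G \<sigma> (inv g))
      = (\<Sum>g\<in>carrier G. (\<Sum>i<n. \<rho> g $$ (i, i)) * (\<Sum>k<m. \<sigma> (inv g) $$ (k, k)))"
  proof (intro sum.cong refl)
    fix g assume g: "g \<in> carrier G"
    then have "dim_row (\<rho> g) = n" "dim_row (\<sigma> (inv g)) = m"
      using complex_rep_carrier[OF r g] complex_rep_carrier[OF s inv_closed[OF g]] by auto
    then show "character G \<rho> g * character G \<sigma> (inv g)
        = (\<Sum>i<n. \<rho> g $$ (i, i)) * (\<Sum>k<m. \<sigma> (inv g) $$ (k, k))"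
      using g by (simp add: character_def mat_trace_def)
  qed
  also have "\<dots> = (\<Sum>g\<in>carrier G. \<Sum>i<n. \<Sum>k<m. \<rho> g $$ (i, i) * \<sigma> (inv g) $$ (k, k))"
    by (simp add: sum_product)
  also have "\<dots> = (\<Sum>i<n. \<Sum>k<m. \<Sum>g\<in>carrier G. \<rho> g $$ (i, i) * \<sigma> (inv g) $$ (k, k))"
    by (subst sum.swap) (simp add: sum.swap[of _ "carrier G"])
  also have "\<dots> = (\<Sum>i<n. \<Sum>k<m. rep_average \<rho> \<sigma> n m (mat_unit n m i k) $$ (i, k))"
    using rep_average_mat_unit_index[OF r s] by simp
  finally show ?thesis .
qed

theorem character_inner_distinct:
  assumes irr: "irreducible_rep G n \<rho>" and irs: "irreducible_rep G m \<sigma>"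
    and ne: "character G \<rho> \<noteq> character G \<sigma>"
  shows "(\<Sum>g\<in>carrier G. character G \<rho> g * character G \<sigma> (inv g)) = 0"
proof -
  have r: "complex_rep G n \<rho>" and s: "complex_rep G m \<sigma>"
    using irr irs by (auto intro: irreducible_rep_complex_rep)
  have "rep_average \<rho> \<sigma> n m X = 0\<^sub>m n m" if X: "X \<in> carrier_mat n m" for X
    using schur_character_eq[OF irr irs rep_average_carrier rep_average_intertwines[OF r s X]] ne
    by blast
  then show ?thesis unfolding character_inner_eq_rep_average_sum[OF r s] by simp
qed

theorem character_inner_self:
  assumes irr: "irreducible_rep G n \<rho>"
  shows "(\<Sum>g\<in>carrier G. character G \<rho> g * character G \<rho> (inv g)) = of_nat (card (carrier G))"
proof -
  have r: "complex_rep G n \<rho>" using irr by (rule irreducible_rep_complex_rep)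
  have n: "0 < n" using r by (rule complex_rep_dim_pos)
  have entry: "rep_average \<rho> \<rho> n n (mat_unit n n i k) $$ (i, k)
      = (if i = k then of_nat (card (carrier G)) / of_nat n else 0)"
    if i: "i < n" and k: "k < n" for i k
  proof -
    obtain c where c: "rep_average \<rho> \<rho> n n (mat_unit n n i k) = c \<cdot>\<^sub>m 1\<^sub>m n"
      by (rule schur_scalar[OF irr rep_average_carrier
            rep_average_intertwines[OF r r mat_unit_carrier]])
    have "of_nat n * c = of_nat (card (carrier G)) * (if i = k then 1 else 0)"
      using mat_trace_rep_average[OF r mat_unit_carrier[of n n i k]]
      unfolding c mat_trace_smult_one mat_trace_mat_unit[OF i k] .
    then have "c = (if i = k then of_nat (card (carrier G)) / of_nat n else 0)"
      using n by (auto simp: field_simps)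
    then show ?thesis unfolding c using i k by simp
  qed
  have "(\<Sum>g\<in>carrier G. character G \<rho> g * character G \<rho> (inv g))
      = (\<Sum>i<n. \<Sum>k<n. if i = k then of_nat (card (carrier G)) / of_nat n else (0::complex))"
    unfolding character_inner_eq_rep_average_sum[OF r r] using entry by simp
  also have "\<dots> = of_nat (card (carrier G))" using n by simp
  finally show ?thesis .
qed

lemma IrrE:
  assumes "\<chi> \<in> Irr G"
  obtains n \<rho> where "irreducible_rep G n \<rho>" "\<chi> = character G \<rho>"
  using assms unfolding Irr_def by blast

lemma Irr_one_eq_of_nat: "\<chi> \<in> Irr G \<Longrightarrow> \<exists>d>0. \<chi> \<one> = of_nat d"
  by (metis IrrE irreducible_rep_complex_rep complex_rep_dim_pos character_one)

corollary Irr_orthogonality: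
  assumes "\<psi> \<in> Irr G" "\<chi> \<in> Irr G"
  shows "(\<Sum>g\<in>carrier G. \<psi> g * \<chi> (inv g)) = (if \<psi> = \<chi> then of_nat (card (carrier G)) else 0)"
proof -
  obtain n \<rho> where \<rho>: "irreducible_rep G n \<rho>" "\<psi> = character G \<rho>" using assms(1) by (rule IrrE)
  obtain m \<sigma> where \<sigma>: "irreducible_rep G m \<sigma>" "\<chi> = character G \<sigma>" using assms(2) by (rule IrrE)
  show ?thesis
    using character_inner_self[OF \<sigma>(1)] character_inner_distinct[OF \<rho>(1) \<sigma>(1)] \<rho>(2) \<sigma>(2) by auto
qed

section \<open>Decomposition into irreducible characters\<close>

lemma complex_rep_upper_left_block:
  assumes M: "complex_rep G n M" and tri: "\<And>g. g \<in> carrier G \<Longrightarrow> block_upper_triangular k (M g)"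
    and k: "0 < k" "k \<le> n"
  shows "complex_rep G k (\<lambda>g. upper_left_block k (M g))"
proof (rule complex_repI[OF k(1)])
  show "upper_left_block k (M \<one>) = 1\<^sub>m k"
    using k by (simp add: complex_rep_one[OF M] upper_left_block_one)
  fix g h assume g: "g \<in> carrier G" and h: "h \<in> carrier G"
  show "upper_left_block k (M (g \<otimes> h)) = upper_left_block k (M g) * upper_left_block k (M h)"
    unfolding complex_rep_mult[OF M g h]
    by (rule upper_left_block_mult[OF complex_rep_carrier[OF M g] complex_rep_carrier[OF M h]
          k(2) tri[OF h]])
qed simp

lemma complex_rep_lower_right_block:
  assumes M: "complex_rep G n M" and tri: "\<And>g. g \<in> carrier G \<Longrightarrow> block_upper_triangular k (M g)"
    and k: "k < n"
  shows "complex_rep G (n - k) (\<lambda>g. lower_right_block k (M g))"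
proof (rule complex_repI)
  show "0 < n - k" using k by simp
  show "lower_right_block k (M \<one>) = 1\<^sub>m (n - k)"
    by (simp add: complex_rep_one[OF M] lower_right_block_one)
  fix g h assume g: "g \<in> carrier G" and h: "h \<in> carrier G"
  show "lower_right_block k (M (g \<otimes> h)) = lower_right_block k (M g) * lower_right_block k (M h)"
    unfolding complex_rep_mult[OF M g h] using k
    by (intro lower_right_block_mult[OF complex_rep_carrier[OF M g] complex_rep_carrier[OF M h]
          _ tri[OF g]]) simp
qed (use complex_rep_carrier[OF M] lower_right_block_carrier in blast)

lemma invariant_subspace_block_upper_triangular:
  assumes r: "complex_rep G n \<rho>" and P: "P \<in> carrier_mat n n" and Q: "Q \<in> carrier_mat n n"
    and QP: "Q * P = 1\<^sub>m n"
    and inv: "\<And>g w. g \<in> carrier G \<Longrightarrow> w \<in> W \<Longrightarrow> \<rho> g *\<^sub>v w \<in> W"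
    and first: "\<And>j. j < k \<Longrightarrow> P *\<^sub>v unit_vec n j \<in> W"
    and coords: "\<And>w. w \<in> W \<Longrightarrow> \<exists>c\<in>carrier_vec n. P *\<^sub>v c = w \<and> (\<forall>i\<in>{k..<n}. c $ i = 0)"
    and g: "g \<in> carrier G"
  shows "block_upper_triangular k (Q * \<rho> g * P)"
  unfolding block_upper_triangular_def
proof (intro allI impI)
  fix i j assume j: "j < k" and i: "k \<le> i" "i < dim_row (Q * \<rho> g * P)"
  have rg: "\<rho> g \<in> carrier_mat n n" using complex_rep_carrier[OF r g] .
  have jn: "j < n" and "i < n" using i j Q by auto
  obtain c where c: "c \<in> carrier_vec n" "P *\<^sub>v c = \<rho> g *\<^sub>v (P *\<^sub>v unit_vec n j)"
    "\<forall>i\<in>{k..<n}. c $ i = 0"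
    using coords[OF inv[OF g first[OF j]]] by blast
  have "(Q * \<rho> g * P) *\<^sub>v unit_vec n j = (Q * \<rho> g) *\<^sub>v (P *\<^sub>v unit_vec n j)"
    by (rule assoc_mult_mat_vec) (use P Q rg in auto)
  also have "\<dots> = Q *\<^sub>v (\<rho> g *\<^sub>v (P *\<^sub>v unit_vec n j))"
    by (rule assoc_mult_mat_vec) (use P Q rg in auto)
  also have "\<dots> = (Q * P) *\<^sub>v c" using P Q c by (simp add: assoc_mult_mat_vec)
  also have "\<dots> = c" using QP c by simp
  moreover have "Q * \<rho> g * P \<in> carrier_mat n n" using P Q rg by simp
  ultimately have "(Q * \<rho> g * P) $$ (i, j) = c $ i"
    using index_mult_mat_vec_unit_vec[of "Q * \<rho> g * P" n n i j] jn \<open>i < n\<close> by simp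
  then show "(Q * \<rho> g * P) $$ (i, j) = 0" using c(3) i \<open>i < n\<close> by simp
qed

lemma character_split_if_not_irreducible:
  assumes r: "complex_rep G n \<rho>" and nirr: "\<not> irreducible_rep G n \<rho>"
  obtains k \<rho>\<^sub>1 \<rho>\<^sub>2 where "0 < k" "k < n" "complex_rep G k \<rho>\<^sub>1" "complex_rep G (n - k) \<rho>\<^sub>2"
    "\<And>g. g \<in> carrier G \<Longrightarrow> character G \<rho> g = character G \<rho>\<^sub>1 g + character G \<rho>\<^sub>2 g"
proof -
  obtain W where W: "subspace_vec n W" and inv: "\<And>g w. g \<in> carrier G \<Longrightarrow> w \<in> W \<Longrightarrow> \<rho> g *\<^sub>v w \<in> W"
    and W0: "W \<noteq> {0\<^sub>v n}" and WC: "W \<noteq> carrier_vec n"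
    using nirr r unfolding irreducible_rep_def by blast
  obtain k P Q where k: "0 < k" "k < n" and P: "P \<in> carrier_mat n n" and Q: "Q \<in> carrier_mat n n"
    and PQ: "P * Q = 1\<^sub>m n" and QP: "Q * P = 1\<^sub>m n"
    and first: "\<And>j. j < k \<Longrightarrow> P *\<^sub>v unit_vec n j \<in> W"
    and coords: "\<And>w. w \<in> W \<Longrightarrow> \<exists>c\<in>carrier_vec n. P *\<^sub>v c = w \<and> (\<forall>i\<in>{k..<n}. c $ i = 0)"
    using subspace_vec_adapted_basis[OF W W0 WC] by blast
  define M where "M = (\<lambda>g. Q * \<rho> g * P)"
  have M: "complex_rep G n M" and chM: "character G M = character G \<rho>"
    unfolding M_def using complex_rep_conjugate[OF r P Q PQ QP] by auto
  have tri: "\<And>g. g \<in> carrier G \<Longrightarrow> block_upper_triangular k (M g)"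
    unfolding M_def
    by (rule invariant_subspace_block_upper_triangular[OF r P Q QP inv first coords])
  show ?thesis
  proof (rule that[OF k complex_rep_upper_left_block[OF M tri k(1) less_imp_le[OF k(2)]]
      complex_rep_lower_right_block[OF M tri k(2)]])
    fix g assume g: "g \<in> carrier G"
    have "character G \<rho> g = mat_trace (M g)" using chM g unfolding character_def by metis
    also have "\<dots> = mat_trace (upper_left_block k (M g)) + mat_trace (lower_right_block k (M g))"
      using k by (intro mat_trace_blocks[OF complex_rep_carrier[OF M g]]) simp
    finally show "character G \<rho> g = character G (\<lambda>g. upper_left_block k (M g)) g
        + character G (\<lambda>g. lower_right_block k (M g)) g"
      using g by (simp add: character_def)
  qed
qed

lemma character_eq_sum_list_Irr:
  assumes "complex_rep G n \<rho>"
  shows "\<exists>xs. set xs \<subseteq> Irr G \<and> (\<forall>g\<in>carrier G. character G \<rho> g = (\<Sum>\<psi>\<leftarrow>xs. \<psi> g))"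
  using assms
proof (induction n arbitrary: \<rho> rule: less_induct)
  case (less n)
  show ?case
  proof (cases "irreducible_rep G n \<rho>")
    case True
    then have "character G \<rho> \<in> Irr G" unfolding Irr_def by blast
    then show ?thesis by (intro exI[of _ "[character G \<rho>]"]) auto
  next
    case False
    obtain k \<rho>\<^sub>1 \<rho>\<^sub>2 where k: "0 < k" "k < n"
      and r\<^sub>1: "complex_rep G k \<rho>\<^sub>1" and r\<^sub>2: "complex_rep G (n - k) \<rho>\<^sub>2"
      and split: "\<And>g. g \<in> carrier G \<Longrightarrow> character G \<rho> g = character G \<rho>\<^sub>1 g + character G \<rho>\<^sub>2 g"
      using character_split_if_not_irreducible[OF less.prems False] by blast
    obtain xs\<^sub>1 where "set xs\<^sub>1 \<subseteq> Irr G" "\<forall>g\<in>carrier G. character G \<rho>\<^sub>1 g = (\<Sum>\<psi>\<leftarrow>xs\<^sub>1. \<psi> g)"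
      using less.IH[OF k(2) r\<^sub>1] by blast
    moreover obtain xs\<^sub>2 where "set xs\<^sub>2 \<subseteq> Irr G" "\<forall>g\<in>carrier G. character G \<rho>\<^sub>2 g = (\<Sum>\<psi>\<leftarrow>xs\<^sub>2. \<psi> g)"
      using less.IH[OF _ r\<^sub>2] k by auto
    ultimately show ?thesis using split by (intro exI[of _ "xs\<^sub>1 @ xs\<^sub>2"]) auto
  qed
qed

lemma regular_representation:
  assumes fin: "finite (carrier G)"
  obtains R where "complex_rep G (card (carrier G)) R"
    "\<And>g. g \<in> carrier G \<Longrightarrow> character G R g = (if g = \<one> then of_nat (card (carrier G)) else 0)"
proof -
  define N where "N = card (carrier G)"
  obtain e where e: "bij_betw e {0..<N} (carrier G)"
    using ex_bij_betw_nat_finite[OF fin] unfolding N_def by blast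
  have ec: "\<And>i. i < N \<Longrightarrow> e i \<in> carrier G" and einj: "\<And>i j. i < N \<Longrightarrow> j < N \<Longrightarrow> e i = e j \<Longrightarrow> i = j"
    using e by (auto simp: bij_betw_def inj_on_def)
  have esurj: "\<exists>k<N. e k = x" if "x \<in> carrier G" for x
    using e that by (force simp: bij_betw_def)
  define L where "L = (\<lambda>g. mat N N (\<lambda>(i, j). if e i = g \<otimes> e j then 1 else (0::complex)))"
  have L: "\<And>g. L g \<in> carrier_mat N N" unfolding L_def by simp
  have L_mult: "L (g \<otimes> h) = L g * L h" if g: "g \<in> carrier G" and h: "h \<in> carrier G" for g h
  proof (rule eq_matI)
    fix i j assume "i < dim_row (L g * L h)" "j < dim_col (L g * L h)"
    then have i: "i < N" and j: "j < N" using L[of g] L[of h] by auto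
    obtain k\<^sub>0 where k\<^sub>0: "k\<^sub>0 < N" "e k\<^sub>0 = h \<otimes> e j" using esurj[of "h \<otimes> e j"] h ec[OF j] by auto
    have "(L g * L h) $$ (i, j) = (\<Sum>k\<in>{0..<N}.
        (if e i = g \<otimes> e k then 1 else 0) * (if e k = h \<otimes> e j then 1 else (0::complex)))"
      using i j unfolding L_def by (simp add: scalar_prod_def)
    also have "\<dots> = (\<Sum>k\<in>{0..<N}.
        if k = k\<^sub>0 then (if e i = g \<otimes> e k\<^sub>0 then 1 else 0) else (0::complex))"
      using einj k\<^sub>0 by (intro sum.cong refl) auto
    also have "\<dots> = L (g \<otimes> h) $$ (i, j)"
      using i j k\<^sub>0 g h ec[OF j] unfolding L_def by (simp add: m_assoc)
    finally show "L (g \<otimes> h) $$ (i, j) = (L g * L h) $$ (i, j)" by simp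
  qed (use L[of g] L[of h] L[of "g \<otimes> h"] in auto)
  have "L \<one> = 1\<^sub>m N" unfolding L_def by (rule eq_matI) (use einj ec in auto)
  moreover have "0 < N" unfolding N_def using fin one_closed by (auto simp: card_gt_0_iff)
  ultimately have "complex_rep G N L" using L L_mult by (intro complex_repI) auto
  moreover have "character G L g = (if g = \<one> then of_nat N else 0)" if g: "g \<in> carrier G" for g
  proof -
    have "e i = g \<otimes> e i \<longleftrightarrow> g = \<one>" if "i < N" for i using ec[OF that] g by simp
    then have "character G L g = (\<Sum>i<N. if g = \<one> then 1 else (0::complex))"
      using g unfolding character_def mat_trace_def L_def by simp
    then show ?thesis by simp
  qed
  ultimately show ?thesis unfolding N_def by (rule that)
qed

lemma character_inner_sum_list_Irr:
  assumes xs: "set xs \<subseteq> Irr G" and \<chi>: "\<chi> \<in> Irr G"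
  shows "(\<Sum>g\<in>carrier G. (\<Sum>\<psi>\<leftarrow>xs. \<psi> g) * \<chi> (inv g))
    = of_nat (card (carrier G)) * of_nat (count_list xs \<chi>)"
proof -
  have "(\<Sum>g\<in>carrier G. (\<Sum>\<psi>\<leftarrow>xs. \<psi> g) * \<chi> (inv g))
      = (\<Sum>g\<in>carrier G. \<Sum>\<psi>\<in>set xs. of_nat (count_list xs \<psi>) * \<psi> g * \<chi> (inv g))"
    by (simp add: sum_list_eq_sum_count_list[of "set xs" xs] sum_distrib_right)
  also have "\<dots> = (\<Sum>\<psi>\<in>set xs. of_nat (count_list xs \<psi>) * (\<Sum>g\<in>carrier G. \<psi> g * \<chi> (inv g)))"
    by (subst sum.swap) (simp add: sum_distrib_left mult.assoc)
  also have "\<dots> = (\<Sum>\<psi>\<in>set xs.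
      if \<psi> = \<chi> then of_nat (card (carrier G)) * of_nat (count_list xs \<chi>) else 0)"
    using xs \<chi> Irr_orthogonality by (intro sum.cong refl) auto
  also have "\<dots> = of_nat (card (carrier G)) * of_nat (count_list xs \<chi>)"
    by (cases "\<chi> \<in> set xs") (auto simp: count_list_0_iff)
  finally show ?thesis .
qed

lemma regular_character_decomposition:
  assumes fin: "finite (carrier G)"
  obtains xs where "set xs = Irr G" "\<And>\<chi>. \<chi> \<in> Irr G \<Longrightarrow> of_nat (count_list xs \<chi>) = \<chi> \<one>"
    "\<And>g. g \<in> carrier G \<Longrightarrow> (\<Sum>\<psi>\<leftarrow>xs. \<psi> g) = (if g = \<one> then of_nat (card (carrier G)) else 0)"
proof -
  define N where "N = card (carrier G)"
  obtain R where R: "complex_rep G N R"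
    and chR: "\<And>g. g \<in> carrier G \<Longrightarrow> character G R g = (if g = \<one> then of_nat N else 0)"
    using regular_representation[OF fin] unfolding N_def by blast
  obtain xs where xs: "set xs \<subseteq> Irr G" and dec: "\<forall>g\<in>carrier G. character G R g = (\<Sum>\<psi>\<leftarrow>xs. \<psi> g)"
    using character_eq_sum_list_Irr[OF R] by blast
  have reg: "(\<Sum>\<psi>\<leftarrow>xs. \<psi> g) = (if g = \<one> then of_nat N else 0)" if "g \<in> carrier G" for g
    using dec chR that by simp
  have count: "of_nat (count_list xs \<chi>) = \<chi> \<one>" if \<chi>: "\<chi> \<in> Irr G" for \<chi>
  proof -
    have "of_nat N * of_nat (count_list xs \<chi>) = (\<Sum>g\<in>carrier G. (\<Sum>\<psi>\<leftarrow>xs. \<psi> g) * \<chi> (inv g))"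
      using character_inner_sum_list_Irr[OF xs \<chi>] unfolding N_def ..
    also have "\<dots> = (\<Sum>g\<in>carrier G. if g = \<one> then of_nat N * \<chi> \<one> else 0)"
      using reg by (intro sum.cong) auto
    also have "\<dots> = of_nat N * \<chi> \<one>" using fin by simp
    finally show ?thesis using fin one_closed unfolding N_def by (auto simp: card_gt_0_iff)
  qed
  have "Irr G \<subseteq> set xs"
  proof
    fix \<chi> assume \<chi>: "\<chi> \<in> Irr G"
    then have "count_list xs \<chi> \<noteq> 0" using count[OF \<chi>] Irr_one_eq_of_nat[OF \<chi>] by auto
    then show "\<chi> \<in> set xs" by (simp add: count_list_0_iff)
  qed
  with xs have "set xs = Irr G" by blast
  then show ?thesis using count reg unfolding N_def by (rule that)
qed

theorem Irr_column_orthogonality: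
  assumes fin: "finite (carrier G)" and g: "g \<in> carrier G"
  shows "(\<Sum>\<chi>\<in>Irr G. \<chi> \<one> * \<chi> g) = (if g = \<one> then of_nat (card (carrier G)) else 0)"
proof -
  obtain xs where xs: "set xs = Irr G" and count: "\<And>\<chi>. \<chi> \<in> Irr G \<Longrightarrow> of_nat (count_list xs \<chi>) = \<chi> \<one>"
    and reg: "(\<Sum>\<psi>\<leftarrow>xs. \<psi> g) = (if g = \<one> then of_nat (card (carrier G)) else 0)"
    using regular_character_decomposition[OF fin] g by metis
  have "(\<Sum>\<chi>\<in>Irr G. \<chi> \<one> * \<chi> g) = (\<Sum>\<chi>\<in>set xs. of_nat (count_list xs \<chi>) * \<chi> g)"
    unfolding xs using count by simp
  also have "\<dots> = (\<Sum>\<psi>\<leftarrow>xs. \<psi> g)" by (rule sum_list_eq_sum_count_list[symmetric]) auto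
  finally show ?thesis using reg by simp
qed

section \<open>The centre\<close>

lemma sum_multiplicative_eq_0_or_card:
  fixes f :: "'a \<Rightarrow> 'c::idom"
  assumes f: "\<And>x y. x \<in> carrier G \<Longrightarrow> y \<in> carrier G \<Longrightarrow> f (x \<otimes> y) = f x * f y"
  shows "(\<Sum>x\<in>carrier G. f x) = 0 \<or> (\<Sum>x\<in>carrier G. f x) = of_nat (card (carrier G))"
proof (cases "\<forall>x\<in>carrier G. f x = 1")
  case False
  then obtain x\<^sub>0 where x\<^sub>0: "x\<^sub>0 \<in> carrier G" "f x\<^sub>0 \<noteq> 1" by blast
  have "bij_betw ((\<otimes>) x\<^sub>0) (carrier G) (carrier G)"
    using x\<^sub>0 by (simp add: bij_betw_def inj_on_cmult surj_const_mult)
  then have "(\<Sum>x\<in>carrier G. f x) = (\<Sum>x\<in>carrier G. f (x\<^sub>0 \<otimes> x))"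
    by (rule sum.reindex_bij_betw[symmetric])
  also have "\<dots> = f x\<^sub>0 * (\<Sum>x\<in>carrier G. f x)" using f x\<^sub>0 by (simp add: sum_distrib_left)
  finally have "(1 - f x\<^sub>0) * (\<Sum>x\<in>carrier G. f x) = 0" by (simp add: algebra_simps)
  then show ?thesis using x\<^sub>0 by simp
qed simp

lemma group_centre_commute: "z \<in> group_centre G \<Longrightarrow> g \<in> carrier G \<Longrightarrow> z \<otimes> g = g \<otimes> z"
  unfolding group_centre_def by auto

lemma group_centre_carrier: "z \<in> group_centre G \<Longrightarrow> z \<in> carrier G"
  unfolding group_centre_def by auto

lemma subgroup_group_centre: "subgroup (group_centre G) G"
proof (rule subgroupI)
  show "group_centre G \<subseteq> carrier G" using group_centre_carrier by blast
  show "group_centre G \<noteq> {}" unfolding group_centre_def by auto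
next
  fix z w assume z: "z \<in> group_centre G" and w: "w \<in> group_centre G"
  have zc: "z \<in> carrier G" and wc: "w \<in> carrier G" using z w by (auto intro: group_centre_carrier)
  have "z \<otimes> w \<otimes> g = g \<otimes> (z \<otimes> w)" if g: "g \<in> carrier G" for g
  proof -
    have "z \<otimes> w \<otimes> g = z \<otimes> (g \<otimes> w)"
      using zc wc g group_centre_commute[OF w g] by (simp add: m_assoc)
    also have "\<dots> = g \<otimes> z \<otimes> w"
      using zc wc g group_centre_commute[OF z g] by (simp add: m_assoc[symmetric])
    finally show ?thesis using zc wc g by (simp add: m_assoc)
  qed
  then show "z \<otimes> w \<in> group_centre G" using zc wc unfolding group_centre_def by auto
next
  fix z assume z: "z \<in> group_centre G"
  have zc: "z \<in> carrier G" using z by (rule group_centre_carrier)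
  have "inv z \<otimes> g = g \<otimes> inv z" if g: "g \<in> carrier G" for g
  proof -
    have "z \<otimes> (g \<otimes> inv z) = g \<otimes> z \<otimes> inv z"
      using zc g group_centre_commute[OF z g] by (simp add: m_assoc[symmetric])
    also have "\<dots> = g" using zc g by (simp add: m_assoc)
    also have "\<dots> = z \<otimes> (inv z \<otimes> g)" using zc g by (simp add: m_assoc[symmetric])
    finally show ?thesis using zc g by simp
  qed
  then show "inv z \<in> group_centre G" using zc unfolding group_centre_def by auto
qed

lemma central_element_scalar:
  assumes irr: "irreducible_rep G n \<rho>" and z: "z \<in> group_centre G"
  obtains c where "\<rho> z = c \<cdot>\<^sub>m 1\<^sub>m n"
proof -
  have r: "complex_rep G n \<rho>" using irr by (rule irreducible_rep_complex_rep)
  have zc: "z \<in> carrier G" using z by (rule group_centre_carrier)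
  show ?thesis
  proof (rule schur_scalar[OF irr complex_rep_carrier[OF r zc]])
    fix h assume h: "h \<in> carrier G"
    show "\<rho> h * \<rho> z = \<rho> z * \<rho> h"
      using complex_rep_mult[OF r h zc] complex_rep_mult[OF r zc h] group_centre_commute[OF z h]
      by simp
  qed (rule that)
qed

lemma Irr_mult_centre:
  assumes \<chi>: "\<chi> \<in> Irr G" and z: "z \<in> group_centre G" and w: "w \<in> group_centre G"
  shows "\<chi> \<one> * \<chi> (z \<otimes> w) = \<chi> z * \<chi> w"
proof -
  obtain n \<rho> where irr: "irreducible_rep G n \<rho>" and ch: "\<chi> = character G \<rho>" using \<chi> by (rule IrrE)
  have r: "complex_rep G n \<rho>" using irr by (rule irreducible_rep_complex_rep)
  have zc: "z \<in> carrier G" and wc: "w \<in> carrier G" using z w by (auto intro: group_centre_carrier)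
  obtain c where c: "\<rho> z = c \<cdot>\<^sub>m 1\<^sub>m n" using central_element_scalar[OF irr z] .
  obtain d where d: "\<rho> w = d \<cdot>\<^sub>m 1\<^sub>m n" using central_element_scalar[OF irr w] .
  have "\<rho> (z \<otimes> w) = (c * d) \<cdot>\<^sub>m 1\<^sub>m n"
    unfolding complex_rep_mult[OF r zc wc] c d by (intro eq_matI) auto
  then show ?thesis
    unfolding ch character_def using zc wc c d complex_rep_one[OF r]
    by (simp add: mat_trace_smult_one mat_trace_def)
qed

lemma centre_sum_Irr_nonneg_real:
  assumes \<chi>: "\<chi> \<in> Irr G" and \<chi>': "\<chi>' \<in> Irr G"
  shows "complex_of_real (cmod (\<Sum>z\<in>group_centre G. \<chi> z * cnj (\<chi>' z)))
    = (\<Sum>z\<in>group_centre G. \<chi> z * cnj (\<chi>' z))"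
proof -
  define Z where "Z = group_centre G"
  obtain d where d: "d > 0" "\<chi> \<one> = of_nat d" using Irr_one_eq_of_nat[OF \<chi>] by blast
  obtain d' where d': "d' > 0" "\<chi>' \<one> = of_nat d'" using Irr_one_eq_of_nat[OF \<chi>'] by blast
  define \<omega> where "\<omega> = (\<lambda>z. (\<chi> z / \<chi> \<one>) * cnj (\<chi>' z / \<chi>' \<one>))"
  have hom: "\<omega> (z \<otimes> w) = \<omega> z * \<omega> w" if "z \<in> Z" "w \<in> Z" for z w
  proof -
    have "\<chi> (z \<otimes> w) / \<chi> \<one> = (\<chi> z / \<chi> \<one>) * (\<chi> w / \<chi> \<one>)"
      "\<chi>' (z \<otimes> w) / \<chi>' \<one> = (\<chi>' z / \<chi>' \<one>) * (\<chi>' w / \<chi>' \<one>)"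
      using Irr_mult_centre[OF \<chi>] Irr_mult_centre[OF \<chi>'] that d d' unfolding Z_def
      by (simp_all add: field_simps)
    then show ?thesis unfolding \<omega>_def by (simp add: mult_ac)
  qed
  have "sum \<omega> Z = 0 \<or> sum \<omega> Z = of_nat (card Z)"
    using group.sum_multiplicative_eq_0_or_card[
        OF subgroup.subgroup_is_group[OF subgroup_group_centre is_group], of \<omega>] hom
    unfolding Z_def by simp
  then obtain s :: real where s: "s \<ge> 0" "sum \<omega> Z = of_real s"
  proof
    assume "sum \<omega> Z = 0"
    then show thesis using that[of 0] by simp
  next
    assume "sum \<omega> Z = of_nat (card Z)"
    then show thesis using that[of "real (card Z)"] by simp
  qed
  have "(\<Sum>z\<in>Z. \<chi> z * cnj (\<chi>' z)) = \<chi> \<one> * \<chi>' \<one> * sum \<omega> Z"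
    unfolding \<omega>_def sum_distrib_left using d d'
    by (intro sum.cong refl) (simp add: complex_cnj_divide)
  also have "\<dots> = of_real (real d * real d' * s)" using d d' s by simp
  finally have sum_eq: "(\<Sum>z\<in>Z. \<chi> z * cnj (\<chi>' z)) = of_real (real d * real d' * s)" .
  have "real d * real d' * s \<ge> 0" using s(1) by simp
  then show ?thesis unfolding sum_eq[unfolded Z_def] norm_of_real by simp
qed

theorem degree_weighted_centre_sum:
  assumes fin: "finite (carrier G)"
  shows "(\<Sum>\<chi>\<in>Irr G. \<Sum>\<chi>'\<in>Irr G. char_degree G \<chi> * char_degree G \<chi>' *
        complex_of_real (cmod (\<Sum>x\<in>group_centre G. \<chi> x * cnj (\<chi>' x))))
      = of_nat (card (carrier G)) ^ 2"
proof -
  define N where "N = card (carrier G)"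
  define Z where "Z = group_centre G"
  have Z: "finite Z" "Z \<subseteq> carrier G" "\<one> \<in> Z"
    using fin subgroup.subset[OF subgroup_group_centre]
      subgroup.one_closed[OF subgroup_group_centre]
    unfolding Z_def by (auto intro: finite_subset)
  have column_cnj: "(\<Sum>\<chi>'\<in>Irr G. \<chi>' \<one> * cnj (\<chi>' x)) = (if x = \<one> then of_nat N else 0)"
    if x: "x \<in> carrier G" for x
  proof -
    have "cnj (\<chi>' \<one>) = \<chi>' \<one>" if "\<chi>' \<in> Irr G" for \<chi>' using Irr_one_eq_of_nat[OF that] by auto
    then have "(\<Sum>\<chi>'\<in>Irr G. \<chi>' \<one> * cnj (\<chi>' x)) = cnj (\<Sum>\<chi>'\<in>Irr G. \<chi>' \<one> * \<chi>' x)"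
      by (simp add: cnj_sum)
    then show ?thesis using Irr_column_orthogonality[OF fin x] unfolding N_def by simp
  qed
  have "(\<Sum>\<chi>\<in>Irr G. \<Sum>\<chi>'\<in>Irr G. char_degree G \<chi> * char_degree G \<chi>' *
        complex_of_real (cmod (\<Sum>x\<in>Z. \<chi> x * cnj (\<chi>' x))))
      = (\<Sum>\<chi>\<in>Irr G. \<Sum>\<chi>'\<in>Irr G. \<Sum>x\<in>Z. \<chi> \<one> * \<chi> x * (\<chi>' \<one> * cnj (\<chi>' x)))"
    unfolding char_degree_def Z_def using centre_sum_Irr_nonneg_real
    by (intro sum.cong refl) (simp add: sum_distrib_left mult_ac)
  also have "\<dots> = (\<Sum>\<chi>\<in>Irr G. \<Sum>x\<in>Z. \<chi> \<one> * \<chi> x * (\<Sum>\<chi>'\<in>Irr G. \<chi>' \<one> * cnj (\<chi>' x)))"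
    by (intro sum.cong refl) (simp add: sum.swap[of _ "Irr G"] sum_distrib_left)
  also have "\<dots> = (\<Sum>\<chi>\<in>Irr G. \<chi> \<one> * \<chi> \<one> * of_nat N)"
  proof (intro sum.cong refl)
    fix \<chi>
    have "(\<Sum>x\<in>Z. \<chi> \<one> * \<chi> x * (\<Sum>\<chi>'\<in>Irr G. \<chi>' \<one> * cnj (\<chi>' x)))
        = (\<Sum>x\<in>Z. if x = \<one> then \<chi> \<one> * \<chi> \<one> * of_nat N else 0)"
      using Z(2) column_cnj by (intro sum.cong refl) auto
    also have "\<dots> = \<chi> \<one> * \<chi> \<one> * of_nat N" using Z(1,3) by simp
    finally show "(\<Sum>x\<in>Z. \<chi> \<one> * \<chi> x * (\<Sum>\<chi>'\<in>Irr G. \<chi>' \<one> * cnj (\<chi>' x)))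
        = \<chi> \<one> * \<chi> \<one> * of_nat N" .
  qed
  also have "\<dots> = (\<Sum>\<chi>\<in>Irr G. \<chi> \<one> * \<chi> \<one>) * of_nat N" by (simp add: sum_distrib_right)
  also have "\<dots> = of_nat N * of_nat N"
    using Irr_column_orthogonality[OF fin one_closed] unfolding N_def by simp
  finally show ?thesis unfolding N_def Z_def by (simp add: power2_eq_square)
qed

end

theorem lemma4p3:
  fixes G :: "('a, 'b) monoid_scheme"
  assumes "group G" and "finite (carrier G)"
  shows "(1 / (of_nat (card (carrier G)))^2) *
    (\<Sum>\<chi>\<in>Irr G. \<Sum>\<chi>'\<in>Irr G. char_degree G \<chi> * char_degree G \<chi>' *
        complex_of_real (cmod (\<Sum>x\<in>group_centre G. \<chi> x * cnj (\<chi>' x)))) = (1::complex)"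
proof -
  interpret group G by (rule assms(1))
  have "card (carrier G) > 0" using assms(2) one_closed by (auto simp: card_gt_0_iff)
  then show ?thesis unfolding degree_weighted_centre_sum[OF assms(2)] by simp
qed

end
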